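(* For all $t,t',s\in\Lambda^\infty$: if $t\to^\infty_{\beta\bot}t'$ and $t'\to^\infty_N s$, then $t\to^\infty_N s$.
   Context: Fix an infinite set $V$ of variables and a set $C$ of constants with $V\cap C=\emptyset$, containing a distinguished constant $\bot$. $\Lambda^\infty$ is the set of infinitary lambda-terms: all finite and infinite terms generated coinductively by $t ::= c\mid x\mid t\,t\mid\lambda x.t$, identified up to $\alpha$-equivalence; $s[t/x]$ is capture-avoiding substitution; $\equiv$ is identity; an atom is a variable or constant. For $R\subseteq\Lambda^\infty\times\Lambda^\infty$, the compatible closure $\to_R$ is the least relation with $(s,t)\in R\Rightarrow s\to_R t$ and $s\to_R s'\Rightarrow st\to_R s't,\ ts\to_R ts',\ \lambda x.s\to_R\lambda x.s'$. $\to_\beta$ is the compatible closure of $R_\beta=\{((\lambda x.s)t,s[t/x])\}$, $\to^*_\beta$ its reflexive-transitive closure. A term is in head normal form (hnf) if it is $\lambda x_1\ldots x_m.\,a\,t_1\ldots t_n$ ($m,n\ge0$, $a$ an atom, $a\not\equiv\bot$); $t$ has a hnf if $t\to^*_\beta t'$ for some $t'$ in hnf. $R_\bot=\{(t,\bot)\mid t\text{ has no hnf}, t\not\equiv\bot\}$; $\to_{\beta\bot}$ is the compatible closure of $R_\beta\cup R_\bot$. The infinitary closure $\to^\infty_{\beta\bot}$ is the greatest relation such that whenever $s\to^\infty_{\beta\bot}u$ (with $\to^*$ the reflexive-transitive closure of $\to_{\beta\bot}$): $u\equiv a$ atom and $s\to^*a$; or $u\equiv u_1'u_2'$, $s\to^*u_1u_2$,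 $u_i\to^\infty_{\beta\bot}u_i'$; or $u\equiv\lambda x.r'$, $s\to^*\lambda x.r$, $r\to^\infty_{\beta\bot}r'$. Weak head contraction $\to_w$ is the least relation with $(\lambda x.s)t\to_w s[t/x]$ and $s\to_w s'\Rightarrow st\to_w s't$; head contraction $\to_h$ is the least relation with $s\to_w s'\Rightarrow s\to_h s'$ and $s\to_h s'\Rightarrow\lambda x.s\to_h\lambda x.s'$; $\to^*_h$ is its reflexive-transitive closure. The relation $\to^\infty_N$ is the greatest relation such that whenever $t\to^\infty_N u$, either (i) $u\equiv\bot$ and $t$ has no hnf, or (ii) $u\equiv\lambda x_1\ldots x_n.\,a\,t_1'\ldots t_m'$ with $a$ an atom, $a\not\equiv\bot$, and there are $t_1,\ldots,t_m$ with $t\to^*_h\lambda x_1\ldots x_n.\,a\,t_1\ldots t_m$ and $t_i\to^\infty_N t_i'$ for $i=1,\ldots,m$. *)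

theory Defs
  imports "HOL-Library.BNF_Corec"
begin

text \<open>Infinitary lambda-terms up to alpha-equivalence, in de Bruijn representation.\<close>

codatatype 'c trm =
    Var nat
  | Const 'c
  | Bot
  | App "'c trm" "'c trm"
  | Lam "'c trm"

definition is_atom :: "'c trm \<Rightarrow> bool" where
  "is_atom t \<longleftrightarrow> (\<exists>n. t = Var n) \<or> (\<exists>c. t = Const c) \<or> t = Bot"

primcorec lift :: "nat \<Rightarrow> 'c trm \<Rightarrow> 'c trm" where
  "lift k t = (case t of
      Var n \<Rightarrow> Var (if n < k then n else Suc n)
    | Const c \<Rightarrow> Const c
    | Bot \<Rightarrow> Bot
    | App a b \<Rightarrow> App (lift k a) (lift k b)
    | Lam a \<Rightarrow> Lam (lift (Suc k) a))"

corec subst :: "nat \<Rightarrow> 'c trm \<Rightarrow> 'c trm \<Rightarrow> 'c trm" where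
  "subst k s t = (case t of
      Var n \<Rightarrow> (if n < k then Var n else if n = k then (lift 0 ^^ k) s else Var (n - 1))
    | Const c \<Rightarrow> Const c
    | Bot \<Rightarrow> Bot
    | App a b \<Rightarrow> App (subst k s a) (subst k s b)
    | Lam a \<Rightarrow> Lam (subst (Suc k) s a))"

inductive beta :: "'c trm \<Rightarrow> 'c trm \<Rightarrow> bool" where
  beta_redex: "beta (App (Lam s) t) (subst 0 t s)"
| beta_app1: "beta s s' \<Longrightarrow> beta (App s t) (App s' t)"
| beta_app2: "beta s s' \<Longrightarrow> beta (App t s) (App t s')"
| beta_lam: "beta s s' \<Longrightarrow> beta (Lam s) (Lam s')"

inductive hnf_body :: "'c trm \<Rightarrow> bool" where
  "is_atom a \<Longrightarrow> a \<noteq> Bot \<Longrightarrow> hnf_body a"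
| "hnf_body s \<Longrightarrow> hnf_body (App s u)"

inductive hnf :: "'c trm \<Rightarrow> bool" where
  "hnf_body t \<Longrightarrow> hnf t"
| "hnf t \<Longrightarrow> hnf (Lam t)"

definition has_hnf :: "'c trm \<Rightarrow> bool" where
  "has_hnf t \<longleftrightarrow> (\<exists>t'. beta\<^sup>*\<^sup>* t t' \<and> hnf t')"

inductive bb :: "'c trm \<Rightarrow> 'c trm \<Rightarrow> bool" where
  bb_redex: "bb (App (Lam s) t) (subst 0 t s)"
| bb_bot: "\<not> has_hnf t \<Longrightarrow> t \<noteq> Bot \<Longrightarrow> bb t Bot"
| bb_app1: "bb s s' \<Longrightarrow> bb (App s t) (App s' t)"
| bb_app2: "bb s s' \<Longrightarrow> bb (App t s) (App t s')"
| bb_lam: "bb s s' \<Longrightarrow> bb (Lam s) (Lam s')"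

coinductive inf_bb :: "'c trm \<Rightarrow> 'c trm \<Rightarrow> bool" where
  inf_atom: "is_atom a \<Longrightarrow> bb\<^sup>*\<^sup>* s a \<Longrightarrow> inf_bb s a"
| inf_app: "bb\<^sup>*\<^sup>* s (App u1 u2) \<Longrightarrow> inf_bb u1 u1' \<Longrightarrow> inf_bb u2 u2' \<Longrightarrow> inf_bb s (App u1' u2')"
| inf_lam: "bb\<^sup>*\<^sup>* s (Lam r) \<Longrightarrow> inf_bb r r' \<Longrightarrow> inf_bb s (Lam r')"

inductive whead :: "'c trm \<Rightarrow> 'c trm \<Rightarrow> bool" where
  "whead (App (Lam s) t) (subst 0 t s)"
| "whead s s' \<Longrightarrow> whead (App s t) (App s' t)"

inductive head :: "'c trm \<Rightarrow> 'c trm \<Rightarrow> bool" where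
  "whead s s' \<Longrightarrow> head s s'"
| "head s s' \<Longrightarrow> head (Lam s) (Lam s')"

definition lams :: "nat \<Rightarrow> 'c trm \<Rightarrow> 'c trm" where
  "lams n t = (Lam ^^ n) t"

definition apps :: "'c trm \<Rightarrow> 'c trm list \<Rightarrow> 'c trm" where
  "apps a ts = foldl App a ts"

coinductive infN :: "'c trm \<Rightarrow> 'c trm \<Rightarrow> bool" where
  infN_bot: "\<not> has_hnf t \<Longrightarrow> infN t Bot"
| infN_hnf: "is_atom a \<Longrightarrow> a \<noteq> Bot \<Longrightarrow> length ts = length ts' \<Longrightarrow>
     head\<^sup>*\<^sup>* t (lams n (apps a ts)) \<Longrightarrow>
     (\<forall>i < length ts. infN (ts ! i) (ts' ! i)) \<Longrightarrow>
     infN t (lams n (apps a ts'))"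

end

theory Submission
  imports Defs
begin

text \<open>
  An infinitary beta-bot reduction can be standardised: it can be replaced by a reduction that at
  every depth first performs weak head steps, and that collapses to Bot only subterms without head
  normal form (\<open>std_bb\<close> below). Standard reductions absorb further beta- and bot-steps
  at their end; for bot-steps this uses that they never destroy head normal forms, because a weak
  head step of the source is either swallowed by the weak head prefix or matched by a weak head step
  of the target. Now if \<open>t'\<close> head-reduces to \<open>\<lambda>x\<^sub>1..x\<^sub>n. a t\<^sub>1 .. t\<^sub>m\<close>, this head reduction pulls back along
  the standard reduction from \<open>t\<close> to a head reduction of \<open>t\<close> to some
  \<open>\<lambda>x\<^sub>1..x\<^sub>n. a w\<^sub>1 .. w\<^sub>m\<close> with \<open>w\<^sub>i\<close> reducing standardly to \<open>t\<^sub>i\<close>, and if \<open>t'\<close> has no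
  head normal form then neither has \<open>t\<close>; coinduction concludes.
  The same construction without collapsing gives head normalisation (a beta-reduction to a head
  normal form can be replaced by a head reduction to one), on which the closure properties of the
  terms without head normal form rest.
\<close>

section \<open>De Bruijn shifting and substitution\<close>

lemma lift_simps [simp]:
  "lift k (Var n) = Var (if n < k then n else Suc n)"
  "lift k (Const c) = Const c"
  "lift k Bot = Bot"
  "lift k (App a b) = App (lift k a) (lift k b)"
  "lift k (Lam a) = Lam (lift (Suc k) a)"
  by (subst lift.code; simp)+

lemma subst_simps [simp]:
  "subst k s (Var n) = (if n < k then Var n else if n = k then (lift 0 ^^ k) s else Var (n - 1))"
  "subst k s (Const c) = Const c"
  "subst k s Bot = Bot"
  "subst k s (App a b) = App (subst k s a) (subst k s b)"
  "subst k s (Lam a) = Lam (subst (Suc k) s a)"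
  by (subst subst.code; simp)+

lemma is_atom_simps [simp]:
  "is_atom (Var n)" "is_atom (Const c)" "is_atom Bot" "\<not> is_atom (App a b)" "\<not> is_atom (Lam a)"
  by (auto simp: is_atom_def)

lemma lams_0 [simp]: "lams 0 t = t"
  by (simp add: lams_def)

lemma lams_Suc [simp]: "lams (Suc n) t = Lam (lams n t)"
  by (simp add: lams_def)

lemma apps_Nil [simp]: "apps a [] = a"
  by (simp add: apps_def)

lemma apps_snoc [simp]: "apps a (us @ [u]) = App (apps a us) u"
  by (simp add: apps_def)

lemma lift_lift: "i \<le> k \<Longrightarrow> lift (Suc k) (lift i t) = lift i (lift k t)"
proof (coinduction arbitrary: i k t rule: trm.coinduct_strong)
  case (Eq_trm i k t)
  then show ?case by (cases t) auto
qed

lemma lift_funpow_lift0: "j \<le> i \<Longrightarrow> lift j ((lift 0 ^^ i) u) = (lift 0 ^^ Suc i) u"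
proof (induction i arbitrary: j)
  case (Suc i)
  show ?case
  proof (cases j)
    case (Suc j')
    then have "lift j ((lift 0 ^^ Suc i) u) = lift 0 (lift j' ((lift 0 ^^ i) u))"
      by (simp add: lift_lift)
    then show ?thesis using Suc Suc.prems Suc.IH[of j'] by simp
  qed simp
qed simp

lemma lift_funpow_lift0_commute:
  "j \<le> i \<Longrightarrow> lift i ((lift 0 ^^ j) s) = (lift 0 ^^ j) (lift (i - j) s)"
proof (induction j arbitrary: i)
  case (Suc j)
  then obtain i' where "i = Suc i'" "j \<le> i'" by (cases i) auto
  then show ?case using Suc.IH[of i'] by (simp add: lift_lift)
qed simp

lemma lift_subst: "j \<le> i \<Longrightarrow> lift i (subst j s t) = subst j (lift (i - j) s) (lift (Suc i) t)"
proof (coinduction arbitrary: i j t rule: trm.coinduct_strong)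
  case (Eq_trm i j t)
  then show ?case
  proof (cases t)
    case (Var n)
    with Eq_trm show ?thesis
      by (cases "n = j") (auto simp: lift_funpow_lift0_commute)
  next
    case (Lam x)
    with Eq_trm show ?thesis by auto (metis Suc_le_mono diff_Suc_Suc)
  qed auto
qed

lemma subst_lift_commute: "a \<le> i \<Longrightarrow> subst (Suc i) u (lift a x) = lift a (subst i u x)"
proof (coinduction arbitrary: a i x rule: trm.coinduct_strong)
  case (Eq_trm a i x)
  then show ?case
  proof (cases x)
    case (Var n)
    with Eq_trm show ?thesis
      by (cases "n = i") (auto simp: lift_funpow_lift0 simp del: funpow.simps)
  next
    case (Lam y)
    with Eq_trm show ?thesis by auto
  qed auto
qed

lemma subst_lift_cancel: "subst a t (lift a x) = x"
proof (coinduction arbitrary: a x rule: trm.coinduct_strong)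
  case (Eq_trm a x)
  then show ?case by (cases x) auto
qed

lemma subst_funpow_lift0:
  "j \<le> i \<Longrightarrow> subst i u ((lift 0 ^^ j) t) = (lift 0 ^^ j) (subst (i - j) u t)"
proof (induction j arbitrary: i)
  case (Suc j)
  then obtain i' where "i = Suc i'" "j \<le> i'" by (cases i) auto
  then show ?case using Suc.IH[of i'] by (simp add: subst_lift_commute)
qed simp

lemma subst_subst:
  "j \<le> i \<Longrightarrow> subst i u (subst j t s) = subst j (subst (i - j) u t) (subst (Suc i) u s)"
proof (coinduction arbitrary: i j s rule: trm.coinduct_strong)
  case (Eq_trm i j s)
  then show ?case
  proof (cases s)
    case (Var n)
    have "(lift 0 ^^ Suc i) u = lift j ((lift 0 ^^ i) u)"
      using Eq_trm lift_funpow_lift0[of j i u] by (simp del: funpow.simps)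
    then have vanish: "subst j (subst (i - j) u t) ((lift 0 ^^ Suc i) u) = (lift 0 ^^ i) u"
      by (simp only: subst_lift_cancel)
    consider "n < j" | "n = j" | "j < n" "n \<le> i" | "n = Suc i" | "Suc i < n" by linarith
    then show ?thesis
      using Eq_trm Var vanish by cases (auto simp: subst_funpow_lift0 simp del: funpow.simps)
  next
    case (Lam y)
    with Eq_trm show ?thesis by auto (metis Suc_le_mono diff_Suc_Suc)
  qed auto
qed

lemma whead_lift: "whead a b \<Longrightarrow> whead (lift k a) (lift k b)"
proof (induction arbitrary: k rule: whead.induct)
  case (1 s t)
  have "lift k (subst 0 t s) = subst 0 (lift k t) (lift (Suc k) s)"
    using lift_subst[of 0 k t s] by simp
  then show ?case by (simp add: whead.intros)
qed (simp add: whead.intros)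

lemma whead_subst: "whead a b \<Longrightarrow> whead (subst k u a) (subst k u b)"
proof (induction arbitrary: k rule: whead.induct)
  case (1 s t)
  have "subst k u (subst 0 t s) = subst 0 (subst k u t) (subst (Suc k) u s)"
    using subst_subst[of 0 k u t s] by simp
  then show ?case by (simp add: whead.intros)
qed (simp add: whead.intros)

lemma whead_star_lift: "whead\<^sup>*\<^sup>* a b \<Longrightarrow> whead\<^sup>*\<^sup>* (lift k a) (lift k b)"
  by (induction rule: rtranclp_induct) (auto intro: rtranclp.rtrancl_into_rtrancl whead_lift)

lemma whead_star_subst: "whead\<^sup>*\<^sup>* a b \<Longrightarrow> whead\<^sup>*\<^sup>* (subst k u a) (subst k u b)"
  by (induction rule: rtranclp_induct) (auto intro: rtranclp.rtrancl_into_rtrancl whead_subst)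

lemma whead_star_App: "whead\<^sup>*\<^sup>* a b \<Longrightarrow> whead\<^sup>*\<^sup>* (App a c) (App b c)"
  by (induction rule: rtranclp_induct) (auto intro: rtranclp.rtrancl_into_rtrancl whead.intros)

lemma head_star_Lam: "head\<^sup>*\<^sup>* a b \<Longrightarrow> head\<^sup>*\<^sup>* (Lam a) (Lam b)"
  by (induction rule: rtranclp_induct) (auto intro: rtranclp.rtrancl_into_rtrancl head.intros)

lemma whead_star_imp_head_star: "whead\<^sup>*\<^sup>* a b \<Longrightarrow> head\<^sup>*\<^sup>* a b"
  by (induction rule: rtranclp_induct) (auto intro: rtranclp.rtrancl_into_rtrancl head.intros)

lemma whead_imp_beta: "whead a b \<Longrightarrow> beta a b"
  by (induction rule: whead.induct) (auto intro: beta.intros)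

lemma head_imp_beta: "head a b \<Longrightarrow> beta a b"
  by (induction rule: head.induct) (auto intro: beta.intros whead_imp_beta)

lemma head_star_imp_beta_star: "head\<^sup>*\<^sup>* a b \<Longrightarrow> beta\<^sup>*\<^sup>* a b"
  by (induction rule: rtranclp_induct) (auto intro: rtranclp.rtrancl_into_rtrancl head_imp_beta)

lemma no_whead_Lam [simp]: "\<not> whead (Lam a) b"
  by (auto elim: whead.cases)

lemma no_whead_atom: "is_atom a \<Longrightarrow> \<not> whead a b"
  by (auto simp: is_atom_def elim: whead.cases)

lemma whead_det: "whead a b \<Longrightarrow> whead a c \<Longrightarrow> b = c"
proof (induction arbitrary: c rule: whead.induct)
  case 1
  from 1 show ?case by cases auto
next
  case 2
  from 2(3) show ?case by cases (use 2 in auto)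
qed

lemma head_Lam_iff: "head (Lam s) c \<longleftrightarrow> (\<exists>b. c = Lam b \<and> head s b)"
proof
  assume "head (Lam s) c"
  then show "\<exists>b. c = Lam b \<and> head s b" by cases auto
qed (auto intro: head.intros(2))

lemma head_not_Lam_imp_whead: "head a c \<Longrightarrow> \<forall>x. a \<noteq> Lam x \<Longrightarrow> whead a c"
  by (erule head.cases) auto

lemma head_det: "head a b \<Longrightarrow> head a c \<Longrightarrow> b = c"
proof (induction arbitrary: c rule: head.induct)
  case (1 s s' c)
  then have "\<forall>x. s \<noteq> Lam x" by auto
  then have "whead s c" using "1.prems" head_not_Lam_imp_whead by blast
  then show ?case using "1.hyps" whead_det by blast
next
  case (2 s s' c)
  then obtain b where "c = Lam b" "head s b" using head_Lam_iff by blast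
  then show ?case using "2.IH" by simp
qed

lemma whead_star_atom: "whead\<^sup>*\<^sup>* a b \<Longrightarrow> is_atom a \<Longrightarrow> b = a"
  by (induction rule: converse_rtranclp_induct) (auto dest: no_whead_atom)

lemma whead_star_Lam: "whead\<^sup>*\<^sup>* (Lam a) b \<Longrightarrow> b = Lam a"
  by (erule converse_rtranclpE) auto

lemma whead_star_from_normal: "(\<And>y. \<not> whead x y) \<Longrightarrow> whead\<^sup>*\<^sup>* x z \<Longrightarrow> z = x"
  by (erule converse_rtranclpE) auto

lemma whead_star_step: "whead t t1 \<Longrightarrow> whead\<^sup>*\<^sup>* t x \<Longrightarrow> x = t \<or> whead\<^sup>*\<^sup>* t1 x"
  by (erule converse_rtranclpE) (auto dest: whead_det)

section \<open>Head-standard infinitary reduction\<close>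

text \<open>
  It is used with \<open>P\<close> empty (plain infinitary
  beta-reduction) and with \<open>P\<close> the terms without head normal form.
\<close>

coinductive std_red :: "('c trm \<Rightarrow> bool) \<Rightarrow> 'c trm \<Rightarrow> 'c trm \<Rightarrow> bool" for P where
  std_bot: "P s \<Longrightarrow> std_red P s Bot"
| std_atom: "is_atom a \<Longrightarrow> whead\<^sup>*\<^sup>* s a \<Longrightarrow> std_red P s a"
| std_app: "whead\<^sup>*\<^sup>* s (App u1 u2) \<Longrightarrow> std_red P u1 v1 \<Longrightarrow> std_red P u2 v2 \<Longrightarrow>
    std_red P s (App v1 v2)"
| std_lam: "whead\<^sup>*\<^sup>* s (Lam r) \<Longrightarrow> std_red P r r' \<Longrightarrow> std_red P s (Lam r')"

lemma std_red_refl: "std_red P t t"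
proof (coinduction arbitrary: t rule: std_red.coinduct)
  case (std_red t)
  then show ?case by (cases t) auto
qed

lemma std_red_apps:
  assumes "is_atom a" "a \<noteq> Bot"
  shows "std_red P t (apps a us) \<Longrightarrow> \<exists>ws. whead\<^sup>*\<^sup>* t (apps a ws) \<and> list_all2 (std_red P) ws us"
proof (induction us arbitrary: t rule: rev_induct)
  case Nil
  then have "std_red P t a" by simp
  then show ?case using assms by cases (auto intro: exI[of _ "[]"])
next
  case (snoc u us)
  from snoc.prems have "std_red P t (App (apps a us) u)" by simp
  then show ?case
  proof cases
    case (std_app w1 w2)
    obtain ws where ws: "whead\<^sup>*\<^sup>* w1 (apps a ws)" "list_all2 (std_red P) ws us"
      using snoc.IH[OF std_app(2)] by blast
    have "whead\<^sup>*\<^sup>* t (apps a (ws @ [w2]))"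
      using std_app(1) whead_star_App[OF ws(1), of w2] by simp
    moreover have "list_all2 (std_red P) (ws @ [w2]) (us @ [u])"
      using ws(2) std_app(3) by (simp add: list_all2_appendI)
    ultimately show ?thesis by blast
  qed simp_all
qed

lemma std_red_lams_apps:
  assumes "is_atom a" "a \<noteq> Bot"
  shows "std_red P t (lams n (apps a us)) \<Longrightarrow>
    \<exists>ws. head\<^sup>*\<^sup>* t (lams n (apps a ws)) \<and> list_all2 (std_red P) ws us"
proof (induction n arbitrary: t)
  case 0
  then show ?case using std_red_apps[OF assms] whead_star_imp_head_star by fastforce
next
  case (Suc n)
  from Suc.prems have "std_red P t (Lam (lams n (apps a us)))" by simp
  then show ?case
  proof cases
    case (std_lam r)
    obtain ws where ws: "head\<^sup>*\<^sup>* r (lams n (apps a ws))" "list_all2 (std_red P) ws us"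
      using Suc.IH[OF std_lam(2)] by blast
    have "head\<^sup>*\<^sup>* t (Lam r)" using std_lam(1) whead_star_imp_head_star by blast
    then have "head\<^sup>*\<^sup>* t (lams (Suc n) (apps a ws))"
      using head_star_Lam[OF ws(1)] by simp
    then show ?thesis using ws(2) by blast
  qed simp_all
qed

locale meaningless =
  fixes P :: "'c trm \<Rightarrow> bool"
  assumes meaningless_lift: "P s \<Longrightarrow> P (lift k s)"
    and meaningless_subst: "P s \<Longrightarrow> P (subst k u s)"
    and meaningless_whead_expand: "whead s s' \<Longrightarrow> P s' \<Longrightarrow> P s"
begin

lemma meaningless_whead_star_expand: "whead\<^sup>*\<^sup>* s s' \<Longrightarrow> P s' \<Longrightarrow> P s"
  by (induction rule: converse_rtranclp_induct) (auto intro: meaningless_whead_expand)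

lemma std_red_prepend:
  assumes "whead\<^sup>*\<^sup>* s s1" and "std_red P s1 t"
  shows "std_red P s t"
  using assms(2) rtranclp_trans[OF assms(1)] meaningless_whead_star_expand[OF assms(1)]
  by cases (auto intro: std_red.intros)

lemma std_red_lift: "std_red P p p' \<Longrightarrow> std_red P (lift k p) (lift k p')"
proof (coinduction arbitrary: k p p' rule: std_red.coinduct)
  case (std_red k p p')
  then show ?case
  proof cases
    case std_bot
    then show ?thesis using meaningless_lift by simp
  next
    case std_atom
    then have "is_atom (lift k p')" by (auto simp: is_atom_def)
    then show ?thesis using std_atom whead_star_lift[of p p' k] by auto
  next
    case (std_app u1 u2)
    then show ?thesis using whead_star_lift[of p "App u1 u2" k] by simp blast
  next
    case (std_lam r)
    then show ?thesis using whead_star_lift[of p "Lam r" k] by simp blast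
  qed
qed

lemma std_red_funpow_lift0: "std_red P p p' \<Longrightarrow> std_red P ((lift 0 ^^ n) p) ((lift 0 ^^ n) p')"
  by (induction n) (auto intro: std_red_lift)

lemma std_red_subst:
  assumes "std_red P p p'" and q: "std_red P q q'"
  shows "std_red P (subst k q p) (subst k q' p')"
  using assms(1)
proof (coinduction arbitrary: k p p' rule: std_red.coinduct)
  case (std_red k p p')
  then show ?case
  proof cases
    case std_bot
    then show ?thesis using meaningless_subst by simp
  next
    case std_atom
    have w: "whead\<^sup>*\<^sup>* (subst k q p) (subst k q p')" using std_atom whead_star_subst by blast
    show ?thesis
    proof (cases "p' = Var k")
      case True
      have "std_red P (subst k q p) (subst k q' p')"
        using std_red_prepend[OF w] std_red_funpow_lift0[OF q] True by simp
      then show ?thesis by cases auto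
    next
      case False
      then have "is_atom (subst k q' p')" "subst k q' p' = subst k q p'"
        using std_atom by (cases p'; auto)+
      then show ?thesis using w by auto
    qed
  next
    case (std_app u1 u2)
    then show ?thesis using whead_star_subst[of p "App u1 u2" k q] by simp blast
  next
    case (std_lam r)
    then show ?thesis using whead_star_subst[of p "Lam r" k q] by simp blast
  qed
qed

lemma std_red_append_beta: "beta t u \<Longrightarrow> std_red P s t \<Longrightarrow> std_red P s u"
proof (induction arbitrary: s rule: beta.induct)
  case (beta_redex p q)
  from beta_redex show ?case
  proof cases
    case (std_app u1 u2)
    from std_app(2) obtain r where r: "whead\<^sup>*\<^sup>* u1 (Lam r)" "std_red P r p"
      by cases auto
    have "whead\<^sup>*\<^sup>* s (App (Lam r) u2)"
      using std_app(1) whead_star_App[OF r(1)] by (rule rtranclp_trans)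
    then have "whead\<^sup>*\<^sup>* s (subst 0 u2 r)"
      by (rule rtranclp.rtrancl_into_rtrancl) (rule whead.intros)
    moreover have "std_red P (subst 0 u2 r) (subst 0 q p)"
      using std_red_subst[OF r(2) std_app(3)] .
    ultimately show ?thesis using std_red_prepend by blast
  qed simp_all
next
  case beta_app1
  from beta_app1(3) show ?case by cases (auto intro: std_red.intros beta_app1.IH)
next
  case beta_app2
  from beta_app2(3) show ?case by cases (auto intro: std_red.intros beta_app2.IH)
next
  case beta_lam
  from beta_lam(3) show ?case by cases (auto intro: std_red.intros beta_lam.IH)
qed

lemma std_red_append_beta_star: "beta\<^sup>*\<^sup>* t u \<Longrightarrow> std_red P s t \<Longrightarrow> std_red P s u"
  by (induction rule: rtranclp_induct) (auto intro: std_red_append_beta)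

lemma beta_star_imp_std_red: "beta\<^sup>*\<^sup>* s t \<Longrightarrow> std_red P s t"
  using std_red_append_beta_star std_red_refl by blast

end

section \<open>Head normal forms\<close>

lemma hnf_body_iff: "hnf_body h \<longleftrightarrow> (\<exists>a us. h = apps a us \<and> is_atom a \<and> a \<noteq> Bot)"
proof
  show "hnf_body h \<Longrightarrow> \<exists>a us. h = apps a us \<and> is_atom a \<and> a \<noteq> Bot"
  proof (induction rule: hnf_body.induct)
    case (1 a)
    then show ?case by (intro exI[of _ a] exI[of _ "[]"]) simp
  next
    case (2 s u)
    then obtain a us where "s = apps a us" "is_atom a" "a \<noteq> Bot" by blast
    then show ?case by (intro exI[of _ a] exI[of _ "us @ [u]"]) simp
  qed
next
  have "is_atom a \<Longrightarrow> a \<noteq> Bot \<Longrightarrow> hnf_body (apps a us)" for a :: "'c trm" and us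
    by (induction us rule: rev_induct) (auto intro: hnf_body.intros)
  then show "\<exists>a us. h = apps a us \<and> is_atom a \<and> a \<noteq> Bot \<Longrightarrow> hnf_body h" by blast
qed

lemma hnf_iff: "hnf h \<longleftrightarrow> (\<exists>n a us. h = lams n (apps a us) \<and> is_atom a \<and> a \<noteq> Bot)"
proof
  show "hnf h \<Longrightarrow> \<exists>n a us. h = lams n (apps a us) \<and> is_atom a \<and> a \<noteq> Bot"
  proof (induction rule: hnf.induct)
    case (1 t)
    then show ?case by (metis hnf_body_iff lams_0)
  next
    case (2 t)
    then obtain n a us where "t = lams n (apps a us)" "is_atom a" "a \<noteq> Bot" by blast
    then show ?case by (intro exI[of _ "Suc n"] exI[of _ a] exI[of _ us]) simp
  qed
next
  have "is_atom a \<Longrightarrow> a \<noteq> Bot \<Longrightarrow> hnf (lams n (apps a us))" for a :: "'c trm" and n us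
  proof (induction n)
    case 0
    then show ?case using hnf_body_iff hnf.intros(1) by fastforce
  qed (simp add: hnf.intros(2))
  then show "\<exists>n a us. h = lams n (apps a us) \<and> is_atom a \<and> a \<noteq> Bot \<Longrightarrow> hnf h" by blast
qed

lemma hnf_imp_has_hnf: "hnf t \<Longrightarrow> has_hnf t"
  unfolding has_hnf_def by blast

lemma hnf_body_Var: "hnf_body (Var n)"
  by (rule hnf_body.intros) auto

lemma hnf_Var: "hnf (Var n)"
  by (rule hnf.intros(1)[OF hnf_body_Var])

lemma hnf_Lam_iff: "hnf (Lam t) \<longleftrightarrow> hnf t"
proof
  show "hnf (Lam t) \<Longrightarrow> hnf t" by (erule hnf.cases) (auto elim: hnf_body.cases)
qed (rule hnf.intros(2))

lemma hnf_body_no_whead: "hnf_body h \<Longrightarrow> \<not> whead h x"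
proof (induction arbitrary: x rule: hnf_body.induct)
  case (1 a)
  then show ?case using no_whead_atom by blast
next
  case (2 s u)
  show ?case
  proof
    assume "whead (App s u) x"
    then show False
      by cases (use 2 in \<open>auto elim: hnf_body.cases\<close>)
  qed
qed

lemma hnf_no_head: "hnf h \<Longrightarrow> \<not> head h x"
proof (induction arbitrary: x rule: hnf.induct)
  case (1 t)
  then have "\<forall>y. t \<noteq> Lam y" by (auto elim: hnf_body.cases)
  then show ?case using 1 hnf_body_no_whead head_not_Lam_imp_whead by blast
next
  case (2 t)
  then show ?case using head_Lam_iff by blast
qed

interpretation no_collapse: meaningless "\<lambda>_. False"
  by unfold_locales auto

lemma head_normalization: "beta\<^sup>*\<^sup>* t h \<Longrightarrow> hnf h \<Longrightarrow> \<exists>h'. head\<^sup>*\<^sup>* t h' \<and> hnf h'"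
  using no_collapse.beta_star_imp_std_red std_red_lams_apps by (metis hnf_iff)

lemma has_hnf_iff_head: "has_hnf t \<longleftrightarrow> (\<exists>h. head\<^sup>*\<^sup>* t h \<and> hnf h)"
  unfolding has_hnf_def using head_normalization head_star_imp_beta_star by blast

lemma head_star_to_hnf: "head\<^sup>*\<^sup>* t t1 \<Longrightarrow> head\<^sup>*\<^sup>* t h \<Longrightarrow> hnf h \<Longrightarrow> head\<^sup>*\<^sup>* t1 h"
proof (induction rule: rtranclp_induct)
  case (step t0 t1)
  then have "head\<^sup>*\<^sup>* t0 h" by blast
  then show ?case
  proof (cases rule: converse_rtranclpE)
    case base
    then show ?thesis using step hnf_no_head by blast
  next
    case (step x)
    then show ?thesis using \<open>head t0 t1\<close> head_det by blast
  qed
qed simp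

lemma has_hnf_head_step: "head t t1 \<Longrightarrow> has_hnf t \<Longrightarrow> has_hnf t1"
  unfolding has_hnf_iff_head using head_star_to_hnf by blast

lemma has_hnf_beta_expand: "beta t t1 \<Longrightarrow> has_hnf t1 \<Longrightarrow> has_hnf t"
  unfolding has_hnf_def by (meson converse_rtranclp_into_rtranclp)

lemma head_star_from_Lam:
  assumes "head\<^sup>*\<^sup>* (Lam p) h"
  shows "\<exists>h'. h = Lam h' \<and> head\<^sup>*\<^sup>* p h'"
proof -
  have "head\<^sup>*\<^sup>* x h \<Longrightarrow> x = Lam p \<Longrightarrow> \<exists>h'. h = Lam h' \<and> head\<^sup>*\<^sup>* p h'" for x p
  proof (induction arbitrary: p rule: converse_rtranclp_induct)
    case (step x y)
    then have "head (Lam p) y" by simp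
    then obtain b where b: "y = Lam b" "head p b" by (auto simp: head_Lam_iff)
    then obtain h' where "h = Lam h'" "head\<^sup>*\<^sup>* b h'" using step.IH by blast
    with b(2) show ?case by (auto intro: converse_rtranclp_into_rtranclp)
  qed simp
  then show ?thesis using assms by blast
qed

lemma has_hnf_Lam_iff: "has_hnf (Lam p) \<longleftrightarrow> has_hnf p"
proof
  assume "has_hnf (Lam p)"
  then obtain h where h: "head\<^sup>*\<^sup>* (Lam p) h" "hnf h" unfolding has_hnf_iff_head by blast
  obtain h' where "h = Lam h'" "head\<^sup>*\<^sup>* p h'" using head_star_from_Lam[OF h(1)] by blast
  with h(2) show "has_hnf p" unfolding has_hnf_iff_head by (auto simp: hnf_Lam_iff)
next
  assume "has_hnf p"
  then obtain h where "head\<^sup>*\<^sup>* p h" "hnf h" unfolding has_hnf_iff_head by blast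
  then show "has_hnf (Lam p)"
    unfolding has_hnf_iff_head by (auto intro: head_star_Lam simp: hnf_Lam_iff)
qed

lemma has_hnf_reflect:
  assumes head_reflect: "\<And>p y. head (f p) y \<Longrightarrow> hnf p \<or> (\<exists>p'. head p p' \<and> y = f p')"
    and hnf_reflect: "\<And>p. hnf (f p) \<Longrightarrow> hnf p"
    and "has_hnf (f p)"
  shows "has_hnf p"
proof -
  obtain h where h: "head\<^sup>*\<^sup>* (f p) h" "hnf h" using assms(3) unfolding has_hnf_iff_head by blast
  have "x = f p \<Longrightarrow> has_hnf p" if "head\<^sup>*\<^sup>* x h" for x p
    using that
  proof (induction arbitrary: p rule: converse_rtranclp_induct)
    case base
    then show ?case using h(2) hnf_reflect hnf_imp_has_hnf by blast
  next
    case (step x y)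
    then have "hnf p \<or> (\<exists>p'. head p p' \<and> y = f p')" using head_reflect by blast
    then show ?case using step.IH has_hnf_beta_expand head_imp_beta hnf_imp_has_hnf by blast
  qed
  then show ?thesis using h(1) by blast
qed

lemma App_eq_lift_iff:
  "App a b = lift k p \<longleftrightarrow> (\<exists>p1 p2. p = App p1 p2 \<and> a = lift k p1 \<and> b = lift k p2)"
  by (cases p) auto

lemma Lam_eq_lift_iff: "Lam a = lift k p \<longleftrightarrow> (\<exists>p0. p = Lam p0 \<and> a = lift (Suc k) p0)"
  by (cases p) auto

lemma whead_lift_reflect: "whead (lift k p) y \<Longrightarrow> \<exists>p'. whead p p' \<and> y = lift k p'"
proof (induction "lift k p" y arbitrary: p rule: whead.induct)
  case (1 s t)
  from "1" obtain p0 p2 where p: "p = App (Lam p0) p2" "s = lift (Suc k) p0" "t = lift k p2"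
    by (auto simp: App_eq_lift_iff Lam_eq_lift_iff)
  have "subst 0 t s = lift k (subst 0 p2 p0)" using lift_subst[of 0 k p2 p0] p by simp
  then show ?case using p by (auto intro: whead.intros)
next
  case (2 s s' t)
  from "2.hyps"(3) obtain p1 p2 where p: "p = App p1 p2" "s = lift k p1" "t = lift k p2"
    by (auto simp: App_eq_lift_iff)
  then obtain q where "whead p1 q" "s' = lift k q" using "2.hyps"(2) by blast
  then show ?case using p by (auto intro: whead.intros)
qed

lemma head_lift_reflect: "head (lift k p) y \<Longrightarrow> \<exists>p'. head p p' \<and> y = lift k p'"
proof (induction "lift k p" y arbitrary: k p rule: head.induct)
  case (1 s')
  then show ?case using whead_lift_reflect head.intros(1) by blast
next
  case (2 s s')
  from "2.hyps"(3) obtain p0 where p0: "p = Lam p0" "s = lift (Suc k) p0"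
    by (auto simp: Lam_eq_lift_iff)
  then obtain q where "head p0 q" "s' = lift (Suc k) q" using "2.hyps"(2) by blast
  then show ?case using p0 by (auto intro: head.intros)
qed

lemma hnf_body_lift_reflect: "hnf_body (lift k p) \<Longrightarrow> hnf_body p"
proof (induction "lift k p" arbitrary: p rule: hnf_body.induct)
  case 1
  then show ?case by (cases p) (auto intro: hnf_body.intros)
next
  case (2 s u)
  then show ?case by (auto simp: App_eq_lift_iff intro: hnf_body.intros)
qed

lemma hnf_lift_reflect: "hnf (lift k p) \<Longrightarrow> hnf p"
proof (induction "lift k p" arbitrary: k p rule: hnf.induct)
  case 1
  then show ?case using hnf_body_lift_reflect hnf.intros(1) by blast
next
  case (2 t)
  then show ?case by (auto simp: Lam_eq_lift_iff intro: hnf.intros)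
qed

lemma has_hnf_lift_reflect: "has_hnf (lift k p) \<Longrightarrow> has_hnf p"
  by (rule has_hnf_reflect[of "lift k"]) (use head_lift_reflect hnf_lift_reflect in blast)+

lemma App_eq_subst_cases:
  "App a b = subst k u p \<Longrightarrow>
    (\<exists>n. p = Var n) \<or> (\<exists>p1 p2. p = App p1 p2 \<and> a = subst k u p1 \<and> b = subst k u p2)"
  by (cases p) auto

lemma Lam_eq_subst_cases:
  "Lam a = subst k u p \<Longrightarrow> (\<exists>n. p = Var n) \<or> (\<exists>p0. p = Lam p0 \<and> a = subst (Suc k) u p0)"
  by (cases p) auto

lemma whead_subst_reflect:
  "whead (subst k u p) y \<Longrightarrow> hnf_body p \<or> (\<exists>p'. whead p p' \<and> y = subst k u p')"
proof (induction "subst k u p" y arbitrary: p rule: whead.induct)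
  case (1 s t)
  from App_eq_subst_cases[OF "1"] show ?case
  proof (elim disjE exE conjE)
    fix p1 p2 assume p: "p = App p1 p2" "Lam s = subst k u p1" "t = subst k u p2"
    from Lam_eq_subst_cases[OF p(2)] show ?thesis
    proof (elim disjE exE conjE)
      fix p0 assume p0: "p1 = Lam p0" "s = subst (Suc k) u p0"
      have "subst 0 t s = subst k u (subst 0 p2 p0)" using subst_subst[of 0 k u p2 p0] p p0 by simp
      then show ?thesis using p p0 by (auto intro: whead.intros)
    qed (use p hnf_body_Var hnf_body.intros(2) in blast)
  qed (use hnf_body_Var in blast)
next
  case (2 s s' t)
  from App_eq_subst_cases[OF "2.hyps"(3)] show ?case
  proof (elim disjE exE conjE)
    fix p1 p2 assume p: "p = App p1 p2" "s = subst k u p1" "t = subst k u p2"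
    from "2.hyps"(2)[OF p(2)] show ?thesis
      using p by (auto intro: whead.intros hnf_body.intros(2))
  qed (use hnf_body_Var in blast)
qed

lemma head_subst_reflect:
  "head (subst k u p) y \<Longrightarrow> hnf p \<or> (\<exists>p'. head p p' \<and> y = subst k u p')"
proof (induction "subst k u p" y arbitrary: k p rule: head.induct)
  case 1
  then show ?case using whead_subst_reflect head.intros(1) hnf.intros(1) by blast
next
  case (2 s s')
  from Lam_eq_subst_cases[OF "2.hyps"(3)] show ?case
  proof (elim disjE exE conjE)
    fix p0 assume p0: "p = Lam p0" "s = subst (Suc k) u p0"
    from "2.hyps"(2)[OF p0(2)] show ?thesis
      using p0 by (auto intro: head.intros hnf.intros(2))
  qed (use hnf_Var in blast)
qed

lemma hnf_body_subst_reflect: "hnf_body (subst k u p) \<Longrightarrow> hnf_body p"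
proof (induction "subst k u p" arbitrary: p rule: hnf_body.induct)
  case 1
  then show ?case by (cases p) (auto intro: hnf_body.intros)
next
  case (2 s t)
  from App_eq_subst_cases[OF "2.hyps"(3)] show ?case
    using "2.hyps"(2) hnf_body_Var hnf_body.intros(2) by blast
qed

lemma hnf_subst_reflect: "hnf (subst k u p) \<Longrightarrow> hnf p"
proof (induction "subst k u p" arbitrary: k p rule: hnf.induct)
  case 1
  then show ?case using hnf_body_subst_reflect hnf.intros(1) by blast
next
  case (2 t)
  from Lam_eq_subst_cases[OF "2.hyps"(3)] show ?case
    using "2.hyps"(2) hnf_Var hnf.intros(2) by blast
qed

lemma has_hnf_subst_reflect: "has_hnf (subst k u p) \<Longrightarrow> has_hnf p"
  by (rule has_hnf_reflect[of "subst k u"]) (use head_subst_reflect hnf_subst_reflect in blast)+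

lemma has_hnf_App: "has_hnf (App a b) \<Longrightarrow> has_hnf a"
proof -
  assume "has_hnf (App a b)"
  then obtain h where h: "head\<^sup>*\<^sup>* (App a b) h" "hnf h" unfolding has_hnf_iff_head by blast
  have "x = App a b \<Longrightarrow> has_hnf a" if "head\<^sup>*\<^sup>* x h" for x a
    using that
  proof (induction arbitrary: a rule: converse_rtranclp_induct)
    case base
    then have "hnf_body (App a b)" using h(2) by (auto elim: hnf.cases)
    then have "hnf_body a" by (auto elim: hnf_body.cases)
    then show ?case using hnf.intros(1) hnf_imp_has_hnf by blast
  next
    case (step x y)
    then have "whead (App a b) y" using head_not_Lam_imp_whead by blast
    then show ?case
    proof cases
      case (1 c)
      have "has_hnf y" using step.hyps(2) h(2) unfolding has_hnf_iff_head by blast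
      then show ?thesis using 1 has_hnf_subst_reflect has_hnf_Lam_iff by blast
    next
      case (2 a')
      then show ?thesis using step.IH whead_imp_beta has_hnf_beta_expand by blast
    qed
  qed
  then show ?thesis using h(1) by blast
qed

section \<open>Standard reductions collapsing terms without head normal form\<close>

interpretation no_hnf: meaningless "\<lambda>t. \<not> has_hnf t"
proof
  show "\<not> has_hnf s \<Longrightarrow> \<not> has_hnf (lift k s)" for s :: "'c trm" and k
    using has_hnf_lift_reflect by blast
  show "\<not> has_hnf s \<Longrightarrow> \<not> has_hnf (subst k u s)" for s u :: "'c trm" and k
    using has_hnf_subst_reflect by blast
  show "whead s s' \<Longrightarrow> \<not> has_hnf s' \<Longrightarrow> \<not> has_hnf s" for s s' :: "'c trm"
    using has_hnf_head_step head.intros(1) by blast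
qed

abbreviation std_bb :: "'c trm \<Rightarrow> 'c trm \<Rightarrow> bool" where
  "std_bb \<equiv> std_red (\<lambda>t. \<not> has_hnf t)"

lemma std_bb_whead_cases:
  assumes w: "whead t t1" and std: "std_bb t t'" and "has_hnf t1"
  shows "std_bb t1 t' \<or>
    (\<exists>u1 u2 v1 v2. t = App u1 u2 \<and> t' = App v1 v2 \<and> std_bb u1 v1 \<and> std_bb u2 v2)"
  using std
proof cases
  case std_bot
  then show ?thesis using assms has_hnf_beta_expand whead_imp_beta by blast
next
  case std_atom
  then have "whead\<^sup>*\<^sup>* t1 t'" using whead_star_step[OF w] w no_whead_atom by blast
  then show ?thesis using std_atom by (auto intro: std_red.intros)
next
  case (std_app u1 u2 v1 v2)
  from whead_star_step[OF w std_app(2)] show ?thesis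
    using std_app by (auto intro: std_red.intros)
next
  case (std_lam r r')
  then have "whead\<^sup>*\<^sup>* t1 (Lam r)" using whead_star_step[OF w] w by fastforce
  then show ?thesis using std_lam by (auto intro: std_red.intros)
qed

lemma std_bb_whead_step:
  "whead t t1 \<Longrightarrow> std_bb t t' \<Longrightarrow> has_hnf t1 \<Longrightarrow>
    std_bb t1 t' \<or> (\<exists>t1'. whead t' t1' \<and> std_bb t1 t1')"
proof (induction arbitrary: t' rule: whead.induct)
  case (1 p q)
  \<comment> \<open>The redex survives in \<open>t'\<close>: its abstraction cannot have collapsed, as the contractum has an hnf.\<close>
  from std_bb_whead_cases[OF whead.intros(1) 1]
  consider "std_bb (subst 0 q p) t'" | v1 v2 where "t' = App v1 v2" "std_bb (Lam p) v1" "std_bb q v2"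
    by blast
  then show ?case
  proof cases
    case (2 v1 v2)
    note t' = this
    from t'(2) show ?thesis
    proof cases
      case std_bot
      then show ?thesis using "1.prems"(2) has_hnf_subst_reflect has_hnf_Lam_iff by blast
    next
      case (std_lam r r')
      then have "r = p" using whead_star_Lam by blast
      have "whead t' (subst 0 v2 r')" using t'(1) std_lam by (auto intro: whead.intros)
      moreover have "std_bb (subst 0 q p) (subst 0 v2 r')"
        using no_hnf.std_red_subst std_lam(3) \<open>r = p\<close> t'(3) by blast
      ultimately show ?thesis by blast
    qed (auto dest: whead_star_Lam)
  qed blast
next
  case (2 s s' u)
  from std_bb_whead_cases[OF whead.intros(2)[OF 2(1)] "2.prems"]
  consider "std_bb (App s' u) t'" | v1 v2 where "t' = App v1 v2" "std_bb s v1" "std_bb u v2"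
    by blast
  then show ?case
  proof cases
    case (2 v1 v2)
    note t' = this
    have "has_hnf s'" using "2.prems"(2) has_hnf_App by blast
    from "2.IH"[OF t'(2) this] show ?thesis
      using t' by (auto intro: std_red.intros whead.intros)
  qed blast
qed

lemma std_bb_head_step:
  "head t t1 \<Longrightarrow> std_bb t t' \<Longrightarrow> has_hnf t1 \<Longrightarrow>
    std_bb t1 t' \<or> (\<exists>t1'. head t' t1' \<and> std_bb t1 t1')"
proof (induction arbitrary: t' rule: head.induct)
  case 1
  then show ?case using std_bb_whead_step head.intros(1) by blast
next
  case (2 s s')
  from "2.prems"(1) show ?case
  proof cases
    case std_bot
    have "has_hnf (Lam s)" using "2.prems"(2) has_hnf_beta_expand head_imp_beta head.intros(2)[OF 2(1)] by blast
    then show ?thesis using std_bot by blast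
  next
    case (std_lam r r')
    then have "r = s" using whead_star_Lam by blast
    have "has_hnf s'" using "2.prems"(2) has_hnf_Lam_iff by blast
    from "2.IH"[OF std_lam(3)[unfolded \<open>r = s\<close>] this] show ?thesis
      using std_lam by (auto intro: std_red.intros head.intros)
  qed (auto dest: whead_star_Lam)
qed

lemma hnf_body_std_bb: "hnf_body t \<Longrightarrow> std_bb t t' \<Longrightarrow> hnf_body t'"
proof (induction arbitrary: t' rule: hnf_body.induct)
  case (1 a)
  from "1.prems" show ?case
  proof cases
    case std_bot
    then show ?thesis using 1 hnf_imp_has_hnf hnf.intros(1) hnf_body.intros(1) by blast
  next
    case std_atom
    then show ?thesis using whead_star_atom 1 hnf_body.intros(1) by blast
  qed (use 1 whead_star_atom in force)+
next
  case (2 s u)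
  have hb: "hnf_body (App s u)" using "2.hyps" by (rule hnf_body.intros(2))
  have nf: "whead\<^sup>*\<^sup>* (App s u) z \<Longrightarrow> z = App s u" for z
    using hnf_body_no_whead[OF hb] whead_star_from_normal by blast
  from "2.prems" show ?case
  proof cases
    case std_bot
    then show ?thesis using hb hnf_imp_has_hnf hnf.intros(1) by blast
  next
    case (std_app u1 u2 v1 v2)
    then show ?thesis using nf "2.IH" hnf_body.intros(2) by blast
  qed (use nf in force)+
qed

lemma hnf_std_bb: "hnf t \<Longrightarrow> std_bb t t' \<Longrightarrow> hnf t'"
proof (induction arbitrary: t' rule: hnf.induct)
  case 1
  then show ?case using hnf_body_std_bb hnf.intros(1) by blast
next
  case (2 t)
  from "2.prems" show ?case
  proof cases
    case std_bot
    then show ?thesis using 2 hnf.intros(2) hnf_imp_has_hnf by blast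
  next
    case (std_lam r r')
    then show ?thesis using whead_star_Lam "2.IH" hnf.intros(2) by blast
  qed (auto dest: whead_star_Lam)
qed

lemma std_bb_has_hnf: "std_bb t t' \<Longrightarrow> has_hnf t \<Longrightarrow> has_hnf t'"
proof -
  assume std: "std_bb t t'" and "has_hnf t"
  then obtain h where h: "head\<^sup>*\<^sup>* t h" "hnf h" unfolding has_hnf_iff_head by blast
  have "std_bb x x' \<Longrightarrow> has_hnf x'" if "head\<^sup>*\<^sup>* x h" for x x'
    using that
  proof (induction arbitrary: x' rule: converse_rtranclp_induct)
    case base
    then show ?case using h(2) hnf_std_bb hnf_imp_has_hnf by blast
  next
    case (step x y)
    have "has_hnf y" using step.hyps(2) h(2) unfolding has_hnf_iff_head by blast
    from std_bb_head_step[OF step.hyps(1) step.prems this] show ?case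
      using step.IH has_hnf_beta_expand head_imp_beta by blast
  qed
  then show ?thesis using h(1) std by blast
qed

lemma std_bb_append_bb: "bb t u \<Longrightarrow> std_bb s t \<Longrightarrow> std_bb s u"
proof (induction arbitrary: s rule: bb.induct)
  case bb_redex
  then show ?case using no_hnf.std_red_append_beta beta.intros(1) by blast
next
  case bb_bot
  then show ?case using std_bb_has_hnf by (blast intro: std_red.std_bot)
next
  case bb_app1
  from bb_app1.prems show ?case by cases (auto intro: std_red.intros bb_app1.IH)
next
  case bb_app2
  from bb_app2.prems show ?case by cases (auto intro: std_red.intros bb_app2.IH)
next
  case bb_lam
  from bb_lam.prems show ?case by cases (auto intro: std_red.intros bb_lam.IH)
qed

lemma std_bb_append_bb_star: "bb\<^sup>*\<^sup>* t u \<Longrightarrow> std_bb s t \<Longrightarrow> std_bb s u"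
  by (induction rule: rtranclp_induct) (auto intro: std_bb_append_bb)

lemma inf_bb_imp_std_bb:
  assumes "inf_bb t t'"
  shows "std_bb t t'"
proof -
  have "\<exists>v. std_bb t v \<and> inf_bb v t'" using assms std_red_refl by blast
  then show ?thesis
  proof (coinduction arbitrary: t t' rule: std_red.coinduct)
    case (std_red s v')
    then obtain v where v: "std_bb s v" "inf_bb v v'" by blast
    from v(2) show ?case
    proof cases
      case inf_atom
      then have "std_bb s v'" using std_bb_append_bb_star v(1) by blast
      then show ?thesis by cases auto
    next
      case (inf_app u1 u2)
      then have "std_bb s (App u1 u2)" using std_bb_append_bb_star v(1) by blast
      then show ?thesis by cases (use inf_app in auto)
    next
      case (inf_lam r)
      then have "std_bb s (Lam r)" using std_bb_append_bb_star v(1) by blast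
      then show ?thesis by cases (use inf_lam in auto)
    qed
  qed
qed

lemma std_bb_head_hnf:
  assumes "std_bb t t'" "head\<^sup>*\<^sup>* t' (lams n (apps a us))" "is_atom a" "a \<noteq> Bot"
  shows "\<exists>ws. head\<^sup>*\<^sup>* t (lams n (apps a ws)) \<and> list_all2 std_bb ws us"
  using no_hnf.std_red_append_beta_star[OF head_star_imp_beta_star[OF assms(2)] assms(1)]
    std_red_lams_apps[OF assms(3,4)] by blast

theorem lemma5p39:
  fixes t t' s :: "'c trm"
  assumes "inf_bb t t'"
    and "infN t' s"
  shows "infN t s"
proof -
  have "\<exists>t'. std_bb t t' \<and> infN t' s" using assms inf_bb_imp_std_bb by blast
  then show ?thesis
  proof (coinduction arbitrary: t s rule: infN.coinduct)
    case (infN t s)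
    then obtain t' where std: "std_bb t t'" and N: "infN t' s" by blast
    from N show ?case
    proof cases
      case infN_bot
      then show ?thesis using std std_bb_has_hnf by blast
    next
      case (infN_hnf a ts ts' n)
      then obtain ws where ws: "head\<^sup>*\<^sup>* t (lams n (apps a ws))" "list_all2 std_bb ws ts"
        using std_bb_head_hnf[OF std] by blast
      then have "length ws = length ts'"
        and "\<forall>i<length ws. \<exists>t'. std_bb (ws ! i) t' \<and> infN t' (ts' ! i)"
        using infN_hnf by (fastforce simp: list_all2_conv_all_nth)+
      then show ?thesis using infN_hnf(1-3) ws(1)
        by (intro disjI2 exI[of _ a] exI[of _ ws] exI[of _ ts'] exI[of _ t] exI[of _ n]) auto
    qed
  qed
qed

end
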